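(* Let $k,\delta,p$ be positive integers with $p<\delta$, and let $\epsilon>0$ be a real number such that $$\gamma_e:=(1-\epsilon)\frac{\binom{\delta}{p}}{\binom{\delta-p+e}{e}}>1\qquad\text{for all } e\in\{0,1,\dots,p-1\}.$$ Define $\gamma_p:=1$, $A:=\lceil\binom{\delta}{p}/\epsilon\rceil$, and for integers $k,t$ $$\mathcal S_{(k,t,p)}:=\Big\{(k_0,\dots,k_p)\in\mathbb N_0^{p+1}:\ \sum_{i=0}^p k_i=k,\ \sum_{i=0}^p i\,k_i\le t+p\Big\}.$$ Then for all non-negative integers $t$ and $k$ with $\delta k\ge t$, $$M(A+\delta k,t)\ \ge\ \Big\lfloor A\min_{(k_0,\dots,k_p)\in\mathcal S_{(k,t,p)}}\prod_{e=0}^p\gamma_e^{k_e}\Big\rfloor,$$ and in particular $$M(A+\delta k,t)\ \ge\ A\,\frac{(1-\epsilon)^k\binom{\delta}{p}^k}{\binom{\delta k-pk+t+p}{t+p}}-1.$$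
   Context: Binary Z-channel with noiseless feedback: an input $0$ is always received as $0$; an input $1$ is received as $1$ or (an error) as $0$. A feedback encoding strategy of blocklength $n$ for a finite message set $\mathcal M$ consists of functions $c_i:\mathcal M\times\{0,1\}^{i-1}\to\{0,1\}$, $i=1,\dots,n$; when sending $m$, the $i$-th transmitted symbol is $c_i(m,y^{i-1})$, with $y^{i-1}$ the previously received symbols. Let $c(m,y^{n-1})=(c_1(m),\dots,c_n(m,y^{n-1}))$ and $\mathcal Y^n_t(m)=\{y^n\in\{0,1\}^n:y_i\le c_i(m,y^{i-1})\ \forall i,\ d_H(y^n,c(m,y^{n-1}))\le t\}$ ($d_H$ Hamming distance). The strategy is successful if the sets $\mathcal Y^n_t(m)$, $m\in\mathcal M$, are pairwise disjoint. $M(n,t)$ denotes the maximum $|\mathcal M|$ admitting a successful strategy of blocklength $n$ with at most $t$ errors. $\mathbb N_0$ denotes the non-negative integers. *)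

theory Defs
  imports Complex_Main
begin

text \<open>Binary symbols are modelled as bool (False = 0, True = 1), so the
  componentwise order y_i \<le> c_i is the order on bool.
  A feedback encoding strategy is a function enc m ys giving the next
  transmitted symbol for message m after the received prefix ys;
  c_i(m, y^{i-1}) = enc m (take (i-1) y).\<close>

definition codeword :: "('m \<Rightarrow> bool list \<Rightarrow> bool) \<Rightarrow> nat \<Rightarrow> 'm \<Rightarrow> bool list \<Rightarrow> bool list" where
  "codeword enc n m y = map (\<lambda>i. enc m (take i y)) [0..<n]"

definition hamming :: "bool list \<Rightarrow> bool list \<Rightarrow> nat" where
  "hamming x y = card {i. i < length x \<and> i < length y \<and> x ! i \<noteq> y ! i}"

definition Yset :: "('m \<Rightarrow> bool list \<Rightarrow> bool) \<Rightarrow> nat \<Rightarrow> nat \<Rightarrow> 'm \<Rightarrow> bool list set" where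
  "Yset enc n t m = {y. length y = n \<and> (\<forall>i<n. y ! i \<le> enc m (take i y))
                         \<and> hamming y (codeword enc n m y) \<le> t}"

definition successful :: "('m \<Rightarrow> bool list \<Rightarrow> bool) \<Rightarrow> 'm set \<Rightarrow> nat \<Rightarrow> nat \<Rightarrow> bool" where
  "successful enc Ms n t \<longleftrightarrow>
     (\<forall>m\<in>Ms. \<forall>m'\<in>Ms. m \<noteq> m' \<longrightarrow> Yset enc n t m \<inter> Yset enc n t m' = {})"

text \<open>M(n,t): maximal size of a finite message set (w.l.o.g. {0..<N}) admitting a
  successful strategy.\<close>
definition Mmax :: "nat \<Rightarrow> nat \<Rightarrow> nat" where
  "Mmax n t = Max {N. \<exists>enc :: nat \<Rightarrow> bool list \<Rightarrow> bool. successful enc {..<N} n t}"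

definition Sset :: "nat \<Rightarrow> nat \<Rightarrow> nat \<Rightarrow> nat list set" where
  "Sset k t p = {ks. length ks = p + 1 \<and> sum_list ks = k
                     \<and> (\<Sum>i\<le>p. i * ks ! i) \<le> t + p}"

end

theory Submission
  imports Defs
begin

text \<open>Induction on \<open>k\<close>. Precede a strategy for \<open>A + \<delta>k\<close> symbols by a block of \<open>\<delta>\<close> symbols in
  which message \<open>m\<close> sends the weight-\<open>p\<close> word number \<open>m mod C\<close>, where \<open>C = \<delta> choose p\<close>.
  On the Z-channel errors only turn ones into zeros, so a received block of weight \<open>p - e\<close> carries
  exactly \<open>e\<close> errors and is consistent only with the messages whose word covers its ones: at most
  \<open>(\<delta> - p + e choose e) (N div C + 1)\<close> of them, which the remaining symbols must separate
  against \<open>t - e\<close> errors. For \<open>N = \<lfloor>A min\<^bsub>S(k+1,t,p)\<^esub> \<Prod> \<gamma>\<^sub>e ^ k\<^sub>e\<rfloor>\<close> the choice of \<open>\<gamma>\<^sub>e\<close> and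
  \<open>A \<ge> C / \<epsilon>\<close> makes this at most \<open>\<lfloor>A min\<^bsub>S(k,t-e,p)\<^esub> \<Prod> \<gamma>\<^sub>e ^ k\<^sub>e\<rfloor>\<close>, since raising \<open>k\<^sub>e\<close> by
  one maps \<open>S(k,t-e,p)\<close> into \<open>S(k+1,t,p)\<close>. When \<open>p(k+1) \<le> t + p\<close> the minimum is at most 1, and
  sending ones until \<open>m\<close> ones have arrived shows \<open>M(n,t) \<ge> n - t + 1 \<ge> A\<close>.
  The closed form follows from \<open>\<Prod> (\<delta> - p + e choose e) ^ k\<^sub>e \<le> (\<delta>k - pk + t + p choose t + p)\<close>,
  a consequence of Vandermonde's identity.\<close>

section \<open>Strategies and the maximum \<open>M(n,t)\<close>\<close>

fun errorfree_output :: "('m \<Rightarrow> bool list \<Rightarrow> bool) \<Rightarrow> 'm \<Rightarrow> nat \<Rightarrow> bool list" where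
  "errorfree_output enc m 0 = []"
| "errorfree_output enc m (Suc i) = errorfree_output enc m i @ [enc m (errorfree_output enc m i)]"

lemma length_errorfree_output [simp]: "length (errorfree_output enc m i) = i"
  by (induction i) auto

lemma take_errorfree_output: "j \<le> i \<Longrightarrow> take j (errorfree_output enc m i) = errorfree_output enc m j"
  by (induction i) (auto simp: le_Suc_eq)

lemma nth_errorfree_output: "i < n \<Longrightarrow> errorfree_output enc m n ! i = enc m (errorfree_output enc m i)"
  by (induction n) (auto simp: nth_append less_Suc_eq)

lemma length_codeword [simp]: "length (codeword enc n m y) = n"
  by (simp add: codeword_def)

lemma hamming_self [simp]: "hamming x x = 0"
  by (simp add: hamming_def)

lemma errorfree_output_in_Yset: "errorfree_output enc m n \<in> Yset enc n t m"
proof -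
  have "codeword enc n m (errorfree_output enc m n) = errorfree_output enc m n"
    by (rule nth_equalityI) (auto simp: codeword_def take_errorfree_output nth_errorfree_output)
  then show ?thesis
    by (auto simp: Yset_def take_errorfree_output nth_errorfree_output)
qed

lemma successful_card_le_power2:
  fixes N :: nat
  assumes "successful enc {..<N} n t"
  shows "N \<le> 2 ^ n"
proof -
  have "inj_on (\<lambda>m. errorfree_output enc m n) {..<N}"
  proof (rule inj_onI)
    fix m m' assume "m \<in> {..<N}" "m' \<in> {..<N}"
      and same: "errorfree_output enc m n = errorfree_output enc m' n"
    then have "m \<noteq> m' \<Longrightarrow> Yset enc n t m \<inter> Yset enc n t m' = {}"
      using assms by (auto simp: successful_def)
    then show "m = m'"
      using errorfree_output_in_Yset[of enc m n t] errorfree_output_in_Yset[of enc m' n t] same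
      by auto
  qed
  then have "N = card ((\<lambda>m. errorfree_output enc m n) ` {..<N})"
    by (simp add: card_image)
  also have "\<dots> \<le> card {xs. set xs \<subseteq> (UNIV :: bool set) \<and> length xs = n}"
    by (rule card_mono[OF finite_lists_length_eq]) auto
  also have "\<dots> = 2 ^ n"
    using card_lists_length_eq[of "UNIV :: bool set" n] by simp
  finally show ?thesis .
qed

lemma successful_relabel:
  assumes "successful enc Ms n t" "inj_on f R" "f ` R \<subseteq> Ms"
  shows "successful (\<lambda>m. enc (f m)) R n t"
proof -
  have "Yset (\<lambda>m. enc (f m)) n t m = Yset enc n t (f m)" for m
    by (simp add: Yset_def codeword_def)
  then show ?thesis
    using assms unfolding successful_def inj_on_def by (metis image_subset_iff)
qed

lemma
  shows ex_successful_Mmax: "\<exists>enc. successful enc {..<Mmax n t} n t"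
    and le_Mmax_if_successful: "successful enc {..<N} n t \<Longrightarrow> N \<le> Mmax n t"
proof -
  let ?S = "{N. \<exists>enc :: nat \<Rightarrow> bool list \<Rightarrow> bool. successful enc {..<N} n t}"
  have "finite ?S"
    by (rule finite_subset[of _ "{..2 ^ n}"]) (auto dest: successful_card_le_power2)
  moreover have "0 \<in> ?S"
    by (simp add: successful_def)
  ultimately show "\<exists>enc. successful enc {..<Mmax n t} n t"
    using Max_in[of ?S] unfolding Mmax_def by blast
  show "successful enc {..<N} n t \<Longrightarrow> N \<le> Mmax n t"
    unfolding Mmax_def using \<open>finite ?S\<close> by (intro Max_ge) auto
qed

lemma ex_successful_if_card_le_Mmax:
  assumes "finite R" "card R \<le> Mmax n t"
  shows "\<exists>enc. successful enc R n t"
proof -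
  obtain enc where enc: "successful enc {..<Mmax n t} n t"
    using ex_successful_Mmax by blast
  obtain h where "bij_betw h {..<card R} R"
    using ex_bij_betw_nat_finite[OF assms(1)] by (auto simp: atLeast0LessThan)
  then have "bij_betw (inv_into {..<card R} h) R {..<card R}"
    by (rule bij_betw_inv_into)
  then show ?thesis
    using successful_relabel[OF enc, of "inv_into {..<card R} h" R] assms(2)
    by (auto simp: bij_betw_def)
qed

section \<open>Counting ones: \<open>M(n,t) \<ge> n - t + 1\<close>\<close>

definition ones_strategy :: "nat \<Rightarrow> bool list \<Rightarrow> bool" where
  "ones_strategy m ys \<longleftrightarrow> length (filter id ys) < m"

lemma ones_strategy_Yset_prefix_weight_le:
  assumes "y \<in> Yset ones_strategy n t m"
  shows "length (filter id (take i y)) \<le> m"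
proof (induction i)
  case (Suc i)
  show ?case
  proof (cases "i < length y")
    case True
    then have "take (Suc i) y = take i y @ [y ! i]"
      by (simp add: take_Suc_conv_app_nth)
    moreover have "y ! i \<le> ones_strategy m (take i y)"
      using assms True by (auto simp: Yset_def)
    ultimately show ?thesis
      using Suc.IH by (auto simp: ones_strategy_def id_def)
  qed (use Suc.IH in simp)
qed simp

lemma ones_strategy_Yset_weight_eq:
  assumes y: "y \<in> Yset ones_strategy n t m" and "m + t \<le> n"
  shows "length (filter id y) = m"
proof (rule ccontr)
  have len: "length y = n" and ham: "hamming y (codeword ones_strategy n m y) \<le> t"
    using y by (auto simp: Yset_def)
  assume "length (filter id y) \<noteq> m"
  then have less: "length (filter id y) < m"
    using ones_strategy_Yset_prefix_weight_le[OF y, of n] len by simp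
  have "length (filter id (take i y)) < m" for i
    using less length_filter_le[of id "drop i y"]
    by (metis append_take_drop_id filter_append le_less_trans length_append le_add1)
  then have "codeword ones_strategy n m y = replicate n True"
    by (intro nth_equalityI) (auto simp: codeword_def ones_strategy_def)
  then have "hamming y (codeword ones_strategy n m y) = card {i. i < length y \<and> \<not> y ! i}"
    unfolding hamming_def using len by (intro arg_cong[where f = card]) auto
  also have "\<dots> = length (filter Not y)"
    by (simp add: length_filter_conv_card)
  also have "\<dots> = n - length (filter id y)"
    using sum_length_filter_compl[of id y] len by simp
  finally show False
    using ham less \<open>m + t \<le> n\<close> by simp
qed

lemma Mmax_ge_Suc_diff:
  assumes "t \<le> n"
  shows "n - t + 1 \<le> Mmax n t"
proof (rule le_Mmax_if_successful)
  show "successful ones_strategy {..<n - t + 1} n t"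
    unfolding successful_def
  proof (intro ballI impI)
    fix m m' assume "m \<in> {..<n - t + 1}" "m' \<in> {..<n - t + 1}" "m \<noteq> m'"
    then show "Yset ones_strategy n t m \<inter> Yset ones_strategy n t m' = {}"
      using ones_strategy_Yset_weight_eq[of _ n t m] ones_strategy_Yset_weight_eq[of _ n t m'] assms by force
  qed
qed

section \<open>Concatenation of strategies\<close>

definition concat_strategy :: "nat \<Rightarrow> ('m \<Rightarrow> bool list \<Rightarrow> bool)
    \<Rightarrow> (bool list \<Rightarrow> 'm \<Rightarrow> bool list \<Rightarrow> bool) \<Rightarrow> 'm \<Rightarrow> bool list \<Rightarrow> bool" where
  "concat_strategy n1 enc1 enc2 m ys =
     (if length ys < n1 then enc1 m ys else enc2 (take n1 ys) m (drop n1 ys))"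

lemma hamming_append:
  assumes "length a = length c"
  shows "hamming (a @ b) (c @ d) = hamming a c + hamming b d"
proof -
  have "hamming x y = length (filter (\<lambda>(u, v). u \<noteq> v) (zip x y))" for x y
    unfolding hamming_def length_filter_conv_card by (intro arg_cong[where f = card]) auto
  then show ?thesis
    using assms by simp
qed

lemma codeword_concat_strategy:
  assumes "length y = n1 + n2"
  shows "codeword (concat_strategy n1 enc1 enc2) (n1 + n2) m y
       = codeword enc1 n1 m (take n1 y) @ codeword (enc2 (take n1 y)) n2 m (drop n1 y)"
proof (rule nth_equalityI)
  fix i assume "i < length (codeword (concat_strategy n1 enc1 enc2) (n1 + n2) m y)"
  then have "i < n1 + n2"
    by simp
  moreover have "i \<ge> n1 \<Longrightarrow> drop n1 (take i y) = take (i - n1) (drop n1 y)"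
    by (simp add: drop_take)
  ultimately show "codeword (concat_strategy n1 enc1 enc2) (n1 + n2) m y ! i
      = (codeword enc1 n1 m (take n1 y) @ codeword (enc2 (take n1 y)) n2 m (drop n1 y)) ! i"
    using assms by (cases "i < n1") (auto simp: codeword_def concat_strategy_def nth_append min_def)
qed simp

lemma Yset_concat_strategyD:
  assumes y: "y \<in> Yset (concat_strategy n1 enc1 enc2) (n1 + n2) t m"
  defines "y1 \<equiv> take n1 y"
  defines "h \<equiv> hamming y1 (codeword enc1 n1 m y1)"
  shows "length y1 = n1"
    and "\<forall>i<n1. y1 ! i \<le> enc1 m (take i y1)"
    and "h \<le> t"
    and "drop n1 y \<in> Yset (enc2 y1) n2 (t - h) m"
proof -
  have len: "length y = n1 + n2"
    and le: "\<And>i. i < n1 + n2 \<Longrightarrow> y ! i \<le> concat_strategy n1 enc1 enc2 m (take i y)"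
    and ham: "hamming y (codeword (concat_strategy n1 enc1 enc2) (n1 + n2) m y) \<le> t"
    using y by (auto simp: Yset_def)
  have split: "hamming y (codeword (concat_strategy n1 enc1 enc2) (n1 + n2) m y)
      = h + hamming (drop n1 y) (codeword (enc2 y1) n2 m (drop n1 y))"
    using hamming_append[of y1 "codeword enc1 n1 m y1" "drop n1 y"] len
    by (simp add: codeword_concat_strategy h_def y1_def)
  show "length y1 = n1"
    using len by (simp add: y1_def)
  show "\<forall>i<n1. y1 ! i \<le> enc1 m (take i y1)"
    using le len by (auto simp: y1_def concat_strategy_def min_def)
  show "h \<le> t"
    using split ham by simp
  have "drop n1 y ! i \<le> enc2 y1 m (take i (drop n1 y))" if "i < n2" for i
    using le[of "n1 + i"] len that by (simp add: concat_strategy_def min_def drop_take y1_def)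
  then show "drop n1 y \<in> Yset (enc2 y1) n2 (t - h) m"
    using split ham len by (simp add: Yset_def)
qed

lemma successful_concat_strategy:
  assumes h: "\<And>y1 m. length y1 = n1 \<Longrightarrow> m \<in> Ms \<Longrightarrow> \<forall>i<n1. y1 ! i \<le> enc1 m (take i y1)
      \<Longrightarrow> hamming y1 (codeword enc1 n1 m y1) = h y1"
    and succ: "\<And>y1. length y1 = n1 \<Longrightarrow> successful (enc2 y1)
      {m \<in> Ms. (\<forall>i<n1. y1 ! i \<le> enc1 m (take i y1)) \<and> h y1 \<le> t} n2 (t - h y1)"
  shows "successful (concat_strategy n1 enc1 enc2) Ms (n1 + n2) t"
  unfolding successful_def
proof (intro ballI impI)
  fix m m' assume m: "m \<in> Ms" "m' \<in> Ms" "m \<noteq> m'"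
  show "Yset (concat_strategy n1 enc1 enc2) (n1 + n2) t m
      \<inter> Yset (concat_strategy n1 enc1 enc2) (n1 + n2) t m' = {}"
  proof (rule equals0I)
    fix y assume "y \<in> Yset (concat_strategy n1 enc1 enc2) (n1 + n2) t m
      \<inter> Yset (concat_strategy n1 enc1 enc2) (n1 + n2) t m'"
    then have y: "y \<in> Yset (concat_strategy n1 enc1 enc2) (n1 + n2) t m"
      and y': "y \<in> Yset (concat_strategy n1 enc1 enc2) (n1 + n2) t m'"
      by auto
    let ?y1 = "take n1 y"
    note D = Yset_concat_strategyD[OF y] and D' = Yset_concat_strategyD[OF y']
    have hm: "hamming ?y1 (codeword enc1 n1 m ?y1) = h ?y1"
      using h[OF D(1) m(1) D(2)] .
    have hm': "hamming ?y1 (codeword enc1 n1 m' ?y1) = h ?y1"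
      using h[OF D(1) m(2) D'(2)] .
    have "Yset (enc2 ?y1) n2 (t - h ?y1) m \<inter> Yset (enc2 ?y1) n2 (t - h ?y1) m' = {}"
      using succ[OF D(1)] m D(2,3) D'(2,3) hm hm' by (auto simp: successful_def)
    moreover have "drop n1 y \<in> Yset (enc2 ?y1) n2 (t - h ?y1) m"
      using D(4) hm by simp
    moreover have "drop n1 y \<in> Yset (enc2 ?y1) n2 (t - h ?y1) m'"
      using D'(4) hm' by simp
    ultimately show False
      by blast
  qed
qed

lemma le_Mmax_add_block:
  fixes N n1 n2 t :: nat and enc :: "nat \<Rightarrow> bool list \<Rightarrow> bool"
  assumes h: "\<And>y1 m. length y1 = n1 \<Longrightarrow> m < N \<Longrightarrow> \<forall>i<n1. y1 ! i \<le> enc m (take i y1)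
      \<Longrightarrow> hamming y1 (codeword enc n1 m y1) = h y1"
    and card: "\<And>y1. length y1 = n1 \<Longrightarrow>
      card {m \<in> {..<N}. (\<forall>i<n1. y1 ! i \<le> enc m (take i y1)) \<and> h y1 \<le> t} \<le> Mmax n2 (t - h y1)"
  shows "N \<le> Mmax (n1 + n2) t"
proof -
  let ?R = "\<lambda>y1. {m \<in> {..<N}. (\<forall>i<n1. y1 ! i \<le> enc m (take i y1)) \<and> h y1 \<le> t}"
  have "\<forall>y1. \<exists>enc. length y1 = n1 \<longrightarrow> successful enc (?R y1) n2 (t - h y1)"
  proof
    fix y1 :: "bool list"
    show "\<exists>enc. length y1 = n1 \<longrightarrow> successful enc (?R y1) n2 (t - h y1)"
      using ex_successful_if_card_le_Mmax[of "?R y1" n2 "t - h y1"] card[of y1] by simp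
  qed
  then obtain enc2 where enc2: "\<forall>y1. length y1 = n1 \<longrightarrow> successful (enc2 y1) (?R y1) n2 (t - h y1)"
    by (rule exE[OF choice])
  have "successful (concat_strategy n1 enc enc2) {..<N} (n1 + n2) t"
  proof (rule successful_concat_strategy)
    fix y1 m assume "length y1 = n1" "m \<in> {..<N}" "\<forall>i<n1. y1 ! i \<le> enc m (take i y1)"
    then show "hamming y1 (codeword enc n1 m y1) = h y1"
      using h by simp
  next
    fix y1 :: "bool list" assume "length y1 = n1"
    then show "successful (enc2 y1) (?R y1) n2 (t - h y1)"
      using enc2 by simp
  qed
  then show ?thesis
    by (rule le_Mmax_if_successful)
qed

section \<open>A constant-weight first block\<close>

definition indicator_strategy :: "('m \<Rightarrow> nat set) \<Rightarrow> 'm \<Rightarrow> bool list \<Rightarrow> bool" where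
  "indicator_strategy K m ys \<longleftrightarrow> length ys \<in> K m"

definition ones :: "bool list \<Rightarrow> nat set" where
  "ones y = {i. i < length y \<and> y ! i}"

lemma consistent_indicator_strategy_iff:
  "(\<forall>i<length y. y ! i \<le> indicator_strategy K m (take i y)) \<longleftrightarrow> ones y \<subseteq> K m"
  by (auto simp: indicator_strategy_def ones_def min_def)

lemma hamming_indicator_strategy:
  assumes "K m \<subseteq> {..<length y}" "ones y \<subseteq> K m"
  shows "hamming y (codeword (indicator_strategy K) (length y) m y) = card (K m) - card (ones y)"
proof -
  have "{i. i < length y \<and> i < length (codeword (indicator_strategy K) (length y) m y)
        \<and> y ! i \<noteq> codeword (indicator_strategy K) (length y) m y ! i} = K m - ones y"
    using assms by (auto simp: codeword_def indicator_strategy_def ones_def min_def)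
  moreover have "finite (K m)"
    using assms(1) finite_subset by blast
  ultimately show ?thesis
    using assms(2) by (simp add: hamming_def card_Diff_subset finite_subset)
qed

lemma card_residue_class_le:
  fixes C N :: nat
  assumes "0 < C"
  shows "card {m. m < N \<and> m mod C = j} \<le> N div C + 1"
proof -
  have "inj_on (\<lambda>m. m div C) {m. m < N \<and> m mod C = j}"
  proof (rule inj_onI)
    fix x y assume "x \<in> {m. m < N \<and> m mod C = j}" "y \<in> {m. m < N \<and> m mod C = j}" "x div C = y div C"
    then show "x = y"
      using div_mult_mod_eq[of x C] div_mult_mod_eq[of y C] by simp
  qed
  then have "card {m. m < N \<and> m mod C = j} = card ((\<lambda>m. m div C) ` {m. m < N \<and> m mod C = j})"
    by (simp add: card_image)
  also have "\<dots> \<le> card {..N div C}"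
    by (rule card_mono) (auto intro: div_le_mono)
  finally show ?thesis
    by simp
qed

lemma card_residue_classes_le:
  fixes C N :: nat
  assumes "0 < C" "finite J"
  shows "card {m. m < N \<and> m mod C \<in> J} \<le> card J * (N div C + 1)"
proof -
  have "{m. m < N \<and> m mod C \<in> J} = (\<Union>j\<in>J. {m. m < N \<and> m mod C = j})"
    by auto
  then have "card {m. m < N \<and> m mod C \<in> J} \<le> (\<Sum>j\<in>J. card {m. m < N \<and> m mod C = j})"
    using card_UN_le[OF assms(2)] by simp
  also have "\<dots> \<le> (\<Sum>j\<in>J. N div C + 1)"
    by (intro sum_mono card_residue_class_le assms(1))
  finally show ?thesis
    by simp
qed

lemma card_supersets_le:
  assumes "finite A" "Y \<subseteq> A"
  shows "card {K. K \<subseteq> A \<and> card K = p \<and> Y \<subseteq> K} \<le> (card A - card Y) choose (p - card Y)"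
proof -
  have "finite Y"
    using assms finite_subset by blast
  have "inj_on (\<lambda>K. K - Y) {K. K \<subseteq> A \<and> card K = p \<and> Y \<subseteq> K}"
  proof (rule inj_onI)
    fix K K' assume "K \<in> {K. K \<subseteq> A \<and> card K = p \<and> Y \<subseteq> K}" "K' \<in> {K. K \<subseteq> A \<and> card K = p \<and> Y \<subseteq> K}"
      and "K - Y = K' - Y"
    then show "K = K'"
      by (metis Diff_partition mem_Collect_eq)
  qed
  then have "card {K. K \<subseteq> A \<and> card K = p \<and> Y \<subseteq> K}
      = card ((\<lambda>K. K - Y) ` {K. K \<subseteq> A \<and> card K = p \<and> Y \<subseteq> K})"
    by (simp add: card_image)
  also have "\<dots> \<le> card {L. L \<subseteq> A - Y \<and> card L = p - card Y}"
    using assms \<open>finite Y\<close> by (intro card_mono) (auto simp: card_Diff_subset)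
  also have "\<dots> = (card A - card Y) choose (p - card Y)"
    using assms \<open>finite Y\<close> by (simp add: n_subsets card_Diff_subset)
  finally show ?thesis .
qed

lemma card_messages_covering_le:
  fixes C N :: nat
  assumes g: "bij_betw g {..<C} {K. K \<subseteq> A \<and> card K = p}"
    and "finite A" "0 < C" "Y \<subseteq> A"
  shows "card {m. m < N \<and> Y \<subseteq> g (m mod C)} \<le> ((card A - card Y) choose (p - card Y)) * (N div C + 1)"
proof -
  define J where "J = {j \<in> {..<C}. Y \<subseteq> g j}"
  have "inj_on g J"
    using g by (auto simp: J_def bij_betw_def intro: inj_on_subset)
  then have "card J = card (g ` J)"
    by (simp add: card_image)
  also have "\<dots> \<le> card {K. K \<subseteq> A \<and> card K = p \<and> Y \<subseteq> K}"
  proof (rule card_mono)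
    show "finite {K. K \<subseteq> A \<and> card K = p \<and> Y \<subseteq> K}"
      by (rule finite_subset[of _ "Pow A"]) (use \<open>finite A\<close> in auto)
    show "g ` J \<subseteq> {K. K \<subseteq> A \<and> card K = p \<and> Y \<subseteq> K}"
      using g by (auto simp: J_def bij_betw_def)
  qed
  also have "\<dots> \<le> (card A - card Y) choose (p - card Y)"
    using assms by (simp add: card_supersets_le)
  finally have J: "card J \<le> (card A - card Y) choose (p - card Y)" .
  have "{m. m < N \<and> Y \<subseteq> g (m mod C)} = {m. m < N \<and> m mod C \<in> J}"
    using \<open>0 < C\<close> by (auto simp: J_def)
  then have "card {m. m < N \<and> Y \<subseteq> g (m mod C)} \<le> card J * (N div C + 1)"
    using card_residue_classes_le[OF \<open>0 < C\<close>, of J N] by (simp add: J_def)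
  also have "\<dots> \<le> ((card A - card Y) choose (p - card Y)) * (N div C + 1)"
    using J by (rule mult_right_mono) simp
  finally show ?thesis .
qed

lemma le_Mmax_add_constant_weight_block:
  fixes \<delta> p N n t :: nat
  assumes "p \<le> \<delta>"
    and hyp: "\<And>e. e \<le> p \<Longrightarrow> e \<le> t \<Longrightarrow>
      min N (((\<delta> - p + e) choose e) * (N div (\<delta> choose p) + 1)) \<le> Mmax n (t - e)"
  shows "N \<le> Mmax (\<delta> + n) t"
proof -
  define C where "C = \<delta> choose p"
  have "0 < C"
    using \<open>p \<le> \<delta>\<close> by (simp add: C_def)
  obtain g where g: "bij_betw g {..<C} {K. K \<subseteq> {..<\<delta>} \<and> card K = p}"
    using ex_bij_betw_nat_finite[of "{K. K \<subseteq> {..<\<delta>} \<and> card K = p}"]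
    by (auto simp: C_def n_subsets atLeast0LessThan)
  define K where "K m = g (m mod C)" for m
  have K: "K m \<subseteq> {..<\<delta>}" "card (K m) = p" for m
    using g \<open>0 < C\<close> by (auto simp: K_def bij_betw_def)
  define h where "h y1 = p - card (ones y1)" for y1
  show ?thesis
  proof (rule le_Mmax_add_block[where enc = "indicator_strategy K" and h = h])
    fix y1 m assume "length y1 = \<delta>" "\<forall>i<\<delta>. y1 ! i \<le> indicator_strategy K m (take i y1)"
    then show "hamming y1 (codeword (indicator_strategy K) \<delta> m y1) = h y1"
      using hamming_indicator_strategy[of K m y1] consistent_indicator_strategy_iff[of y1 K m] K
      by (simp add: h_def)
  next
    fix y1 :: "bool list" assume "length y1 = \<delta>"
    then have R_eq: "{m \<in> {..<N}. (\<forall>i<\<delta>. y1 ! i \<le> indicator_strategy K m (take i y1)) \<and> h y1 \<le> t}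
        = {m. m < N \<and> ones y1 \<subseteq> K m \<and> h y1 \<le> t}" (is "?R = _")
      using consistent_indicator_strategy_iff[of y1 K] by auto
    show "card ?R \<le> Mmax n (t - h y1)"
    proof (cases "?R = {}")
      case True
      then show ?thesis
        by (simp only: card.empty zero_le)
    next
      case False
      then obtain m0 where "ones y1 \<subseteq> K m0" "h y1 \<le> t"
        using R_eq by auto
      moreover have "finite (K m0)"
        using K(1) finite_subset by blast
      ultimately have Y: "ones y1 \<subseteq> {..<\<delta>}" "card (ones y1) \<le> p" "h y1 \<le> p"
        using K[of m0] card_mono by (auto simp: h_def)
      have "card ?R \<le> card {m. m < N \<and> ones y1 \<subseteq> g (m mod C)}"
        using R_eq by (intro card_mono) (auto simp: K_def)
      also have "\<dots> \<le> ((\<delta> - card (ones y1)) choose (p - card (ones y1))) * (N div C + 1)"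
        using card_messages_covering_le[OF g _ \<open>0 < C\<close> Y(1)] by simp
      also have "\<dots> = ((\<delta> - p + h y1) choose h y1) * (N div C + 1)"
        using Y \<open>p \<le> \<delta>\<close> by (simp add: h_def)
      finally have "card ?R \<le> min N (((\<delta> - p + h y1) choose h y1) * (N div C + 1))"
        using card_mono[of "{..<N}" ?R] by auto
      then show ?thesis
        using hyp[OF Y(3) \<open>h y1 \<le> t\<close>] unfolding C_def by (rule order_trans)
    qed
  qed
qed

section \<open>The minimum over \<open>S(k,t,p)\<close>\<close>

definition Smin :: "(nat \<Rightarrow> real) \<Rightarrow> nat \<Rightarrow> nat \<Rightarrow> nat \<Rightarrow> real" where
  "Smin \<gamma> p k t = Min ((\<lambda>ks. \<Prod>e\<le>p. \<gamma> e ^ (ks ! e)) ` Sset k t p)"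

lemma finite_Sset: "finite (Sset k t p)"
proof (rule finite_subset)
  show "Sset k t p \<subseteq> {ks. set ks \<subseteq> {..k} \<and> length ks = p + 1}"
    by (auto simp: Sset_def dest: member_le_sum_list)
qed (simp add: finite_lists_length_eq)

lemma Cons_replicate_in_Sset: "k # replicate p 0 \<in> Sset k t p"
proof -
  have weight: "(\<Sum>i\<le>p. i * (k # replicate p 0) ! i) = 0"
    by (rule sum.neutral) (auto simp: nth_Cons split: nat.splits)
  show ?thesis
    unfolding Sset_def mem_Collect_eq weight by simp
qed

lemma replicate_snoc_in_Sset:
  assumes "p * k \<le> t + p"
  shows "replicate p 0 @ [k] \<in> Sset k t p"
proof -
  have "(\<Sum>i\<le>p. i * (replicate p 0 @ [k]) ! i) = (\<Sum>i<p. i * (replicate p 0 @ [k]) ! i) + p * k"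
    by (simp add: lessThan_Suc_atMost[symmetric] nth_append)
  also have "(\<Sum>i<p. i * (replicate p 0 @ [k]) ! i) = 0"
    by (rule sum.neutral) (auto simp: nth_append)
  finally show ?thesis
    using assms by (simp add: Sset_def)
qed

lemma Smin_le:
  assumes "ks \<in> Sset k t p"
  shows "Smin \<gamma> p k t \<le> (\<Prod>e\<le>p. \<gamma> e ^ (ks ! e))"
  unfolding Smin_def using assms finite_Sset by (intro Min_le) auto

lemma Smin_attained: "\<exists>ks\<in>Sset k t p. Smin \<gamma> p k t = (\<Prod>e\<le>p. \<gamma> e ^ (ks ! e))"
proof -
  have "Smin \<gamma> p k t \<in> (\<lambda>ks. \<Prod>e\<le>p. \<gamma> e ^ (ks ! e)) ` Sset k t p"
    unfolding Smin_def using finite_Sset Cons_replicate_in_Sset[of k p t] by (intro Min_in) auto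
  then show ?thesis
    by auto
qed

lemma one_le_Smin:
  assumes "\<And>e. e \<le> p \<Longrightarrow> 1 \<le> \<gamma> e"
  shows "1 \<le> Smin \<gamma> p k t"
  using Smin_attained[of k t p \<gamma>] assms by (auto intro!: prod_ge_1 one_le_power)

lemma Smin_le_one:
  assumes "p * k \<le> t + p" "\<gamma> p = 1"
  shows "Smin \<gamma> p k t \<le> 1"
proof -
  have "Smin \<gamma> p k t \<le> (\<Prod>e\<le>p. \<gamma> e ^ ((replicate p 0 @ [k]) ! e))"
    by (rule Smin_le[OF replicate_snoc_in_Sset[OF assms(1)]])
  also have "\<dots> = 1"
    by (rule prod.neutral) (use assms(2) in \<open>auto simp: nth_append\<close>)
  finally show ?thesis .
qed

lemma Smin_Suc_le:
  assumes "e \<le> p" "e \<le> t"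
  shows "Smin \<gamma> p (Suc k) t \<le> \<gamma> e * Smin \<gamma> p k (t - e)"
proof -
  obtain ks where ks: "ks \<in> Sset k (t - e) p"
    and eq: "Smin \<gamma> p k (t - e) = (\<Prod>i\<le>p. \<gamma> i ^ (ks ! i))"
    using Smin_attained by blast
  have len: "length ks = p + 1"
    using ks by (simp add: Sset_def)
  define ks' where "ks' = ks[e := ks ! e + 1]"
  have nth': "ks' ! i = ks ! i + (if i = e then 1 else 0)" if "i \<le> p" for i
    using that len assms by (auto simp: ks'_def nth_list_update)
  have "sum_list ks' = Suc k"
    using ks len assms by (simp add: ks'_def sum_list_update Sset_def)
  moreover have "(\<Sum>i\<le>p. i * ks' ! i) = (\<Sum>i\<le>p. i * ks ! i + (if i = e then e else 0))"
    by (rule sum.cong) (auto simp: nth')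
  then have "(\<Sum>i\<le>p. i * ks' ! i) = (\<Sum>i\<le>p. i * ks ! i) + e"
    using assms by (simp add: sum.distrib)
  ultimately have "ks' \<in> Sset (Suc k) t p"
    using ks len assms by (auto simp: Sset_def ks'_def)
  moreover have "(\<Prod>i\<le>p. \<gamma> i ^ (ks' ! i)) = (\<Prod>i\<le>p. \<gamma> i ^ (ks ! i) * (if i = e then \<gamma> e else 1))"
    by (rule prod.cong) (auto simp: nth')
  then have "(\<Prod>i\<le>p. \<gamma> i ^ (ks' ! i)) = \<gamma> e * (\<Prod>i\<le>p. \<gamma> i ^ (ks ! i))"
    using assms by (simp add: prod.distrib mult.commute)
  ultimately show ?thesis
    using Smin_le eq by metis
qed

section \<open>The recursive lower bound\<close>

lemma scaled_residue_count_le: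
  fixes N C :: nat and A c \<gamma> \<epsilon> \<mu> :: real
  assumes "0 < C" "0 \<le> c" "1 \<le> \<gamma>" "c * \<gamma> \<le> (1 - \<epsilon>) * C" "0 \<le> \<epsilon>" "C \<le> A * \<epsilon>"
    and "1 \<le> \<mu>" "N \<le> A * (\<gamma> * \<mu>)"
  shows "c * (real (N div C) + 1) \<le> A * \<mu>"
proof -
  have C: "0 < real C"
    using assms(1) by simp
  have "0 \<le> A"
  proof (rule ccontr)
    assume "\<not> 0 \<le> A"
    then have "A * \<epsilon> \<le> 0"
      using assms(5) by (simp add: mult_nonpos_nonneg)
    then show False
      using C assms(6) by linarith
  qed
  have "real (N div C) \<le> A * (\<gamma> * \<mu>) / C"
    using of_nat_div_le_of_nat[of N C] assms(8) C by (smt (verit) divide_right_mono)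
  then have "c * (real (N div C) + 1) \<le> c * (A * (\<gamma> * \<mu>) / C + 1)"
    using assms(2) by (simp add: mult_left_mono)
  also have "\<dots> = (c * \<gamma> / C) * (A * \<mu>) + c"
    using C by (simp add: field_simps)
  also have "\<dots> \<le> (1 - \<epsilon>) * (A * \<mu>) + A * \<epsilon> * \<mu>"
  proof (rule add_mono)
    have "c * \<gamma> / C \<le> 1 - \<epsilon>"
      using assms(4) C by (simp add: divide_le_eq)
    moreover have "0 \<le> A * \<mu>"
      using \<open>0 \<le> A\<close> assms(7) by simp
    ultimately show "(c * \<gamma> / C) * (A * \<mu>) \<le> (1 - \<epsilon>) * (A * \<mu>)"
      by (rule mult_right_mono)
    have "c \<le> c * \<gamma>"
      using assms(2,3) by (simp add: mult_le_cancel_left1)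
    also have "\<dots> \<le> (1 - \<epsilon>) * C"
      by (rule assms(4))
    also have "\<dots> \<le> C"
      using assms(5) C by (simp add: algebra_simps)
    also have "\<dots> \<le> A * \<epsilon> * \<mu>"
      using assms(5-7) \<open>0 \<le> A\<close> by (simp add: mult_le_cancel_left1 order_trans)
    finally show "c \<le> A * \<epsilon> * \<mu>" .
  qed
  also have "\<dots> = A * \<mu>"
    by (simp add: algebra_simps)
  finally show ?thesis .
qed

lemma min_block_count_le:
  fixes \<delta> p e N :: nat and A \<epsilon> \<mu> :: real and \<gamma> :: "nat \<Rightarrow> real"
  assumes "p \<le> \<delta>" "0 \<le> \<epsilon>" "real (\<delta> choose p) \<le> A * \<epsilon>" "\<gamma> p = 1" "e \<le> p"
    and "e < p \<Longrightarrow> 1 \<le> \<gamma> e"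
    and "e < p \<Longrightarrow> real ((\<delta> - p + e) choose e) * \<gamma> e \<le> (1 - \<epsilon>) * real (\<delta> choose p)"
    and "1 \<le> \<mu>" "real N \<le> A * (\<gamma> e * \<mu>)"
  shows "real (min N (((\<delta> - p + e) choose e) * (N div (\<delta> choose p) + 1))) \<le> A * \<mu>"
proof (cases "e = p")
  case False
  then have "real ((\<delta> - p + e) choose e) * (real (N div (\<delta> choose p)) + 1) \<le> A * \<mu>"
    using assms by (intro scaled_residue_count_le) simp_all
  then show ?thesis
    by (metis min.cobounded2 of_nat_1 of_nat_add of_nat_mono of_nat_mult order_trans)
qed (use assms in simp)

lemma floor_Smin_le_Mmax:
  fixes \<delta> p A :: nat and \<epsilon> :: real and \<gamma> :: "nat \<Rightarrow> real"
  assumes "p \<le> \<delta>" "0 \<le> \<epsilon>" "real (\<delta> choose p) \<le> real A * \<epsilon>" "\<gamma> p = 1"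
    and \<gamma>_ge: "\<And>e. e < p \<Longrightarrow> 1 \<le> \<gamma> e"
    and \<gamma>_le: "\<And>e. e < p \<Longrightarrow> real ((\<delta> - p + e) choose e) * \<gamma> e \<le> (1 - \<epsilon>) * real (\<delta> choose p)"
    and "t \<le> \<delta> * k"
  shows "\<lfloor>real A * Smin \<gamma> p k t\<rfloor> \<le> int (Mmax (A + \<delta> * k) t)"
proof -
  have \<gamma>_ge': "1 \<le> \<gamma> e" if "e \<le> p" for e
    using \<gamma>_ge \<open>\<gamma> p = 1\<close> that by (cases "e = p") auto
  have base: "\<lfloor>real A * Smin \<gamma> p k t\<rfloor> \<le> int (Mmax (A + \<delta> * k) t)"
    if "p * k \<le> t + p" "t \<le> \<delta> * k" for k t
  proof -
    have "real A * Smin \<gamma> p k t \<le> real A"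
      using Smin_le_one[of p k t \<gamma>] that(1) \<open>\<gamma> p = 1\<close> by (simp add: mult_left_le)
    then have "\<lfloor>real A * Smin \<gamma> p k t\<rfloor> \<le> int A"
      by linarith
    also have "A \<le> Mmax (A + \<delta> * k) t"
      using Mmax_ge_Suc_diff[of t "A + \<delta> * k"] that(2) by simp
    finally show ?thesis
      by simp
  qed
  show ?thesis
    using \<open>t \<le> \<delta> * k\<close>
  proof (induction k arbitrary: t)
    case 0
    then show ?case
      using base[of 0 t] by simp
  next
    case (Suc k)
    show ?case
    proof (cases "p * Suc k \<le> t + p")
      case False
      then have "t < p * k"
        by simp
      then have "t \<le> \<delta> * k"
        using mult_le_mono1[OF \<open>p \<le> \<delta>\<close>, of k] by linarith
      define N where "N = nat \<lfloor>real A * Smin \<gamma> p (Suc k) t\<rfloor>"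
      have N: "\<lfloor>real A * Smin \<gamma> p (Suc k) t\<rfloor> = int N" "real N \<le> real A * Smin \<gamma> p (Suc k) t"
        using one_le_Smin[of p \<gamma> "Suc k" t] \<gamma>_ge' by (simp_all add: N_def)
      have "N \<le> Mmax (\<delta> + (A + \<delta> * k)) t"
      proof (rule le_Mmax_add_constant_weight_block[OF \<open>p \<le> \<delta>\<close>])
        fix e assume e: "e \<le> p" "e \<le> t"
        have "real N \<le> real A * (\<gamma> e * Smin \<gamma> p k (t - e))"
          using N(2) Smin_Suc_le[OF e, of \<gamma> k] by (simp add: mult_left_mono order_trans)
        then have "real (min N (((\<delta> - p + e) choose e) * (N div (\<delta> choose p) + 1)))
            \<le> real A * Smin \<gamma> p k (t - e)"
          using assms(1-4) e \<gamma>_ge \<gamma>_le one_le_Smin[of p \<gamma> k "t - e"] \<gamma>_ge'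
          by (intro min_block_count_le) simp_all
        moreover have "\<lfloor>real A * Smin \<gamma> p k (t - e)\<rfloor> \<le> int (Mmax (A + \<delta> * k) (t - e))"
          using Suc.IH \<open>t \<le> \<delta> * k\<close> by simp
        ultimately show "min N (((\<delta> - p + e) choose e) * (N div (\<delta> choose p) + 1)) \<le> Mmax (A + \<delta> * k) (t - e)"
          by linarith
      qed
      then show ?thesis
        using N(1) by (simp add: add.left_commute)
    qed (use base Suc.prems in blast)
  qed
qed

section \<open>The closed-form bound\<close>

lemma choose_mult_choose_le:
  "((a + x) choose x) * ((b + y) choose y) \<le> (a + b + x + y) choose (x + y)"
proof -
  have "((a + x) choose x) * ((b + y) choose ((x + y) - x))
      \<le> (\<Sum>i\<le>x + y. ((a + x) choose i) * ((b + y) choose ((x + y) - i)))"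
    by (rule member_le_sum) auto
  also have "\<dots> = (a + b + x + y) choose (x + y)"
    by (simp add: vandermonde add_ac)
  finally show ?thesis
    by simp
qed

lemma choose_power_le: "((a + e) choose e) ^ j \<le> (a * j + e * j) choose (e * j)"
proof (induction j)
  case (Suc j)
  have "((a + e) choose e) ^ Suc j \<le> ((a + e) choose e) * ((a * j + e * j) choose (e * j))"
    using Suc.IH by simp
  also have "\<dots> \<le> (a * Suc j + e * Suc j) choose (e * Suc j)"
    using choose_mult_choose_le[of a e "a * j" "e * j"] by (simp add: add_ac)
  finally show ?case .
qed simp

lemma prod_choose_power_le:
  "(\<Prod>e\<le>q. ((a + e) choose e) ^ f e)
     \<le> (a * (\<Sum>e\<le>q. f e) + (\<Sum>e\<le>q. e * f e)) choose (\<Sum>e\<le>q. e * f e)"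
proof (induction q)
  case (Suc q)
  let ?S = "\<Sum>e\<le>q. f e" and ?E = "\<Sum>e\<le>q. e * f e" and ?j = "f (Suc q)"
  have "(\<Prod>e\<le>Suc q. ((a + e) choose e) ^ f e)
      \<le> ((a * ?S + ?E) choose ?E) * ((a * ?j + Suc q * ?j) choose (Suc q * ?j))"
    using Suc.IH choose_power_le[of a "Suc q" ?j] by (simp add: mult_mono)
  also have "\<dots> \<le> (a * (\<Sum>e\<le>Suc q. f e) + (\<Sum>e\<le>Suc q. e * f e)) choose (\<Sum>e\<le>Suc q. e * f e)"
    using choose_mult_choose_le[of "a * ?S" ?E "a * ?j" "Suc q * ?j"] by (simp add: algebra_simps)
  finally show ?case .
qed simp

lemma choose_add_mono:
  assumes "i \<le> j"
  shows "(c + i) choose i \<le> (c + j) choose j"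
  using binomial_right_mono[of "c + i" "c + j" c] assms
  by (simp add: binomial_symmetric[of c "c + i"] binomial_symmetric[of c "c + j"])

lemma Smin_ge_power_div_choose:
  fixes \<gamma> :: "nat \<Rightarrow> real" and g :: real
  assumes "0 \<le> g" and \<gamma>: "\<And>e. e \<le> p \<Longrightarrow> g / real ((a + e) choose e) \<le> \<gamma> e"
  shows "g ^ k / real ((a * k + (t + p)) choose (t + p)) \<le> Smin \<gamma> p k t"
proof -
  obtain ks where ks: "ks \<in> Sset k t p" and Smin_eq: "Smin \<gamma> p k t = (\<Prod>e\<le>p. \<gamma> e ^ (ks ! e))"
    using Smin_attained by blast
  define P where "P = (\<Prod>e\<le>p. ((a + e) choose e) ^ (ks ! e))"
  have "(\<Sum>e\<le>p. ks ! e) = k"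
    using ks by (auto simp: Sset_def sum_list_sum_nth atLeast0LessThan lessThan_Suc_atMost)
  then have "P \<le> (a * k + (\<Sum>e\<le>p. e * ks ! e)) choose (\<Sum>e\<le>p. e * ks ! e)"
    using prod_choose_power_le[of a "\<lambda>e. ks ! e" p] by (simp add: P_def)
  also have "\<dots> \<le> (a * k + (t + p)) choose (t + p)"
    using ks by (intro choose_add_mono) (simp add: Sset_def)
  finally have "real P \<le> real ((a * k + (t + p)) choose (t + p))"
    by (simp only: of_nat_le_iff)
  moreover have "0 < P"
    by (simp add: P_def)
  ultimately have "g ^ k / real ((a * k + (t + p)) choose (t + p)) \<le> g ^ k / real P"
    using \<open>0 \<le> g\<close> by (intro divide_left_mono) simp_all
  also have "\<dots> = (\<Prod>e\<le>p. (g / real ((a + e) choose e)) ^ (ks ! e))"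
    using \<open>(\<Sum>e\<le>p. ks ! e) = k\<close>
    by (simp add: P_def power_divide prod_dividef power_sum[symmetric])
  also have "\<dots> \<le> Smin \<gamma> p k t"
    unfolding Smin_eq using \<open>0 \<le> g\<close> \<gamma> by (intro prod_mono conjI power_mono) simp_all
  finally show ?thesis .
qed

theorem lemma2:
  fixes \<delta> p :: nat and \<epsilon> :: real and \<gamma> :: "nat \<Rightarrow> real" and A :: nat
  assumes "0 < p" and "p < \<delta>" and "\<epsilon> > 0"
    and \<gamma>_def: "\<And>e. e < p \<Longrightarrow> \<gamma> e = (1 - \<epsilon>) * real (\<delta> choose p) / real ((\<delta> - p + e) choose e)"
    and \<gamma>_gt: "\<And>e. e < p \<Longrightarrow> \<gamma> e > 1"
    and \<gamma>_p: "\<gamma> p = 1"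
    and A_def: "A = nat \<lceil>real (\<delta> choose p) / \<epsilon>\<rceil>"
  shows "\<forall>t k :: nat. t \<le> \<delta> * k \<longrightarrow>
      int (Mmax (A + \<delta> * k) t)
        \<ge> \<lfloor>real A * Min ((\<lambda>ks. \<Prod>e\<le>p. \<gamma> e ^ (ks ! e)) ` Sset k t p)\<rfloor>
      \<and> real (Mmax (A + \<delta> * k) t)
        \<ge> real A * ((1 - \<epsilon>) ^ k * real (\<delta> choose p) ^ k)
            / real ((\<delta> * k - p * k + t + p) choose (t + p)) - 1"
proof (intro allI impI)
  fix t k :: nat assume "t \<le> \<delta> * k"
  define g where "g = (1 - \<epsilon>) * real (\<delta> choose p)"
  have "real (\<delta> choose p) \<le> real A * \<epsilon>"
    using \<open>\<epsilon> > 0\<close> by (simp add: A_def pos_divide_le_eq[symmetric])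
  moreover have "real ((\<delta> - p + e) choose e) * \<gamma> e \<le> g" if "e < p" for e
    using \<gamma>_def[OF that] by (simp add: g_def)
  ultimately have floor_le: "\<lfloor>real A * Smin \<gamma> p k t\<rfloor> \<le> int (Mmax (A + \<delta> * k) t)"
    using floor_Smin_le_Mmax[of p \<delta> \<epsilon> A \<gamma>] \<gamma>_gt \<open>p < \<delta>\<close> \<open>\<epsilon> > 0\<close> \<gamma>_p \<open>t \<le> \<delta> * k\<close>
    by (simp add: g_def less_imp_le)
  have "0 \<le> g"
    using \<gamma>_gt[OF \<open>0 < p\<close>] \<gamma>_def[OF \<open>0 < p\<close>] by (simp add: g_def)
  moreover have "g / real ((\<delta> - p + e) choose e) \<le> \<gamma> e" if "e \<le> p" for e
    using \<gamma>_def \<gamma>_p \<open>\<epsilon> > 0\<close> \<open>p < \<delta>\<close> that by (cases "e = p") (auto simp: g_def)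
  ultimately have "g ^ k / real ((\<delta> * k - p * k + t + p) choose (t + p)) \<le> Smin \<gamma> p k t"
    using Smin_ge_power_div_choose[of g p "\<delta> - p" \<gamma> k t] by (simp add: diff_mult_distrib add.assoc)
  then have "real A * (g ^ k / real ((\<delta> * k - p * k + t + p) choose (t + p))) \<le> real A * Smin \<gamma> p k t"
    by (rule mult_left_mono) simp
  moreover have "real_of_int \<lfloor>real A * Smin \<gamma> p k t\<rfloor> \<le> real (Mmax (A + \<delta> * k) t)"
    using floor_le by (metis of_int_le_iff of_int_of_nat_eq)
  ultimately have "real A * (g ^ k / real ((\<delta> * k - p * k + t + p) choose (t + p))) - 1
      \<le> real (Mmax (A + \<delta> * k) t)"
    using real_of_int_floor_gt_diff_one[of "real A * Smin \<gamma> p k t"] by linarith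
  then show "int (Mmax (A + \<delta> * k) t) \<ge> \<lfloor>real A * Min ((\<lambda>ks. \<Prod>e\<le>p. \<gamma> e ^ (ks ! e)) ` Sset k t p)\<rfloor>
      \<and> real (Mmax (A + \<delta> * k) t) \<ge> real A * ((1 - \<epsilon>) ^ k * real (\<delta> choose p) ^ k)
            / real ((\<delta> * k - p * k + t + p) choose (t + p)) - 1"
    using floor_le by (simp add: Smin_def g_def power_mult_distrib)
qed

end
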